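(* Let $n\ge 3$ and w.l.o.g. $n$ odd, let $R=\{x_1,\dots,x_n\}$ with $x_i\in[0,B]$ for $B\in\mathbb{R}$, and $m=\frac{n+1}{2}$ so that $x_{(m)}=\mathrm{median}(R)$ (where $x_{(1)}\le\dots\le x_{(n)}$ are the sorted values). Then $$\mathrm{RS}_{\mathrm{median}}(R)=\tfrac12\max\{x_{(m+1)}-x_{(m)},\,x_{(m)}-x_{(m-1)}\}.$$
   Context: For a finite multiset of reals with sorted values $x_{(1)}\le\dots\le x_{(k)}$, $\mathrm{median}=x_{(\lceil k/2\rceil)}$ for odd $k$ and $\frac{x_{(k/2)}+x_{(k/2+1)}}{2}$ for even $k$. The retain sensitivity is $\mathrm{RS}_{\mathrm{median}}(R)=\max_{x\in[0,B]}|\mathrm{median}(R\cup\{x\})-\mathrm{median}(R)|$. *)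

theory Defs
  imports Main "HOL-Library.Multiset" Complex_Main
begin

definition ord_stat :: "real multiset \<Rightarrow> nat \<Rightarrow> real" where
  "ord_stat R i = sorted_list_of_multiset R ! (i - 1)"

definition median :: "real multiset \<Rightarrow> real" where
  "median R = (let k = size R in
     if odd k then ord_stat R ((k + 1) div 2)
     else (ord_stat R (k div 2) + ord_stat R (k div 2 + 1)) / 2)"

definition RS_median :: "real \<Rightarrow> real multiset \<Rightarrow> real" where
  "RS_median B R = (SUP x\<in>{0..B}. \<bar>median (R + {#x#}) - median R\<bar>)"

end

theory Submission
  imports Defs
begin

(* The two middle order statistics of R + {#x#} are x_(m) and x clamped to [x_(m-1), x_(m+1)],
   so the median moves by half the distance from x_(m) to that clamped value.
   The distance is largest at the endpoints x = 0 or x = B, where it equals x_(m) - x_(m-1) or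
   x_(m+1) - x_(m). *)

lemma nth_0_insort:
  fixes x :: "'a::linorder"
  assumes "xs \<noteq> []"
  shows "insort x xs ! 0 = min x (xs ! 0)"
  using assms by (cases xs) (auto simp: min_def)

lemma nth_insort_sorted:
  fixes x :: "'a::linorder"
  assumes "sorted xs" "0 < i" "i < length xs"
  shows "insort x xs ! i = max (xs ! (i - 1)) (min x (xs ! i))"
  using assms
proof (induction xs arbitrary: i)
  case Nil
  then show ?case by simp
next
  case (Cons y ys)
  have y_le: "y \<le> (y # ys) ! j" if "j < length (y # ys)" for j
    using Cons.prems(1) that by (cases j) auto
  show ?case
  proof (cases "x \<le> y")
    case True
    have "insort x (y # ys) ! i = (y # ys) ! (i - 1)"
      using True Cons.prems(2) by (cases i) auto
    moreover have "min x ((y # ys) ! i) \<le> (y # ys) ! (i - 1)"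
      using order_trans[OF True y_le[of "i - 1"]] Cons.prems(3) by (simp add: min.coboundedI1)
    ultimately show ?thesis by (simp add: max.absorb1)
  next
    case False
    show ?thesis
    proof (cases "i = 1")
      case True
      with Cons.prems have "ys \<noteq> []" by auto
      with True False have "insort x (y # ys) ! i = min x (ys ! 0)"
        by (simp add: nth_0_insort)
      moreover have "y \<le> min x (ys ! 0)"
        using False y_le[of 1] \<open>ys \<noteq> []\<close> by simp
      ultimately show ?thesis using True by (simp add: max.absorb2)
    next
      case False
      then have "insort x ys ! (i - 1) = max (ys ! (i - 2)) (min x (ys ! (i - 1)))"
        using Cons by (simp add: numeral_eq_Suc)
      then show ?thesis
        using \<open>\<not> x \<le> y\<close> False Cons.prems(2) by (cases i) (auto simp: numeral_eq_Suc)
    qed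
  qed
qed

lemma median_odd:
  assumes "odd (size R)"
  shows "median R = ord_stat R ((size R + 1) div 2)"
  using assms by (simp add: median_def)

lemma ord_stat_mono:
  assumes "1 \<le> i" "i \<le> j" "j \<le> size R"
  shows "ord_stat R i \<le> ord_stat R j"
proof -
  have "length (sorted_list_of_multiset R) = size R"
    by (simp flip: size_mset)
  then show ?thesis
    unfolding ord_stat_def using assms by (intro sorted_nth_mono) auto
qed

lemma ord_stat_in_mset:
  assumes "1 \<le> i" "i \<le> size R"
  shows "ord_stat R i \<in># R"
proof -
  have "length (sorted_list_of_multiset R) = size R"
    by (simp flip: size_mset)
  then show ?thesis
    using assms nth_mem[of "i - 1" "sorted_list_of_multiset R"] by (simp add: ord_stat_def)
qed

lemma median_add_mset_odd:
  fixes R :: "real multiset"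
  assumes "size R = 2 * k + 1" "1 \<le> k"
  shows "median (R + {#x#}) =
    (ord_stat R (k + 1) + max (ord_stat R k) (min x (ord_stat R (k + 2)))) / 2"
proof -
  define xs where "xs = sorted_list_of_multiset R"
  have xs: "sorted xs" "length xs = 2 * k + 1"
    using assms(1) by (auto simp: xs_def simp flip: size_mset)
  have "median (R + {#x#}) = (insort x xs ! k + insort x xs ! (k + 1)) / 2"
    using assms(1) by (simp add: median_def ord_stat_def xs_def)
  also have "insort x xs ! k + insort x xs ! (k + 1)
      = max (xs ! (k - 1)) (min x (xs ! k)) + max (xs ! k) (min x (xs ! (k + 1)))"
    using xs assms(2) by (simp add: nth_insort_sorted)
  also have "\<dots> = xs ! k + max (xs ! (k - 1)) (min x (xs ! (k + 1)))"
  proof -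
    have "xs ! (k - 1) \<le> xs ! k" "xs ! k \<le> xs ! (k + 1)"
      using xs assms(2) by (simp_all add: sorted_iff_nth_mono)
    then show ?thesis by (auto simp: max_def min_def)
  qed
  finally show ?thesis
    using assms(2) by (simp add: ord_stat_def xs_def numeral_eq_Suc)
qed

lemma SUP_clamp_deviation:
  fixes a b c B :: real
  assumes "0 \<le> a" "a \<le> b" "b \<le> c" "c \<le> B"
  shows "(SUP x\<in>{0..B}. \<bar>max a (min x c) - b\<bar> / 2) = max (c - b) (b - a) / 2"
proof (rule cSup_eq_maximum)
  show "max (c - b) (b - a) / 2 \<in> (\<lambda>x. \<bar>max a (min x c) - b\<bar> / 2) ` {0..B}"
  proof (cases "c - b \<le> b - a")
    case True
    then show ?thesis using assms by (intro image_eqI[of _ _ 0]) auto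
  next
    case False
    then show ?thesis using assms by (intro image_eqI[of _ _ B]) auto
  qed
qed (use assms in auto)

theorem mainTheorem5:
  fixes R :: "real multiset" and B :: real and n m :: nat
  assumes "size R = n" and "n \<ge> 3" and "odd n"
    and "\<forall>x\<in>#R. 0 \<le> x \<and> x \<le> B"
    and "m = (n + 1) div 2"
  shows "RS_median B R =
    max (ord_stat R (m + 1) - ord_stat R m) (ord_stat R m - ord_stat R (m - 1)) / 2"
proof -
  obtain k where n: "n = 2 * k + 1"
    using assms(3) oddE by blast
  then have k: "1 \<le> k" and m: "m = k + 1"
    using assms(2,5) by simp_all
  define a b c where "a = ord_stat R k" and "b = ord_stat R (k + 1)" and "c = ord_stat R (k + 2)"
  have "a \<in># R" "c \<in># R"
    using assms(1) n k by (simp_all add: a_def c_def ord_stat_in_mset)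
  then have bounds: "0 \<le> a" "a \<le> b" "b \<le> c" "c \<le> B"
    using assms(1,4) n k by (auto simp: a_def b_def c_def ord_stat_mono)
  have deviation:
    "\<bar>median (R + {#x#}) - median R\<bar> = \<bar>max a (min x c) - b\<bar> / 2" for x
  proof -
    have "median (R + {#x#}) - median R = (max a (min x c) - b) / 2"
      using median_add_mset_odd[OF assms(1)[unfolded n] k] median_odd[of R] assms(1,3) n
      by (simp add: a_def b_def c_def field_simps)
    then show ?thesis by (simp only: abs_divide)
  qed
  have "RS_median B R = max (c - b) (b - a) / 2"
    unfolding RS_median_def deviation using SUP_clamp_deviation[OF bounds] .
  then show ?thesis
    using m k by (simp add: a_def b_def c_def numeral_eq_Suc)
qed

end
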